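(* Let $G=(V,E)$ be a finite simple undirected graph and $K$ a nonnegative integer. Construct an edge-labeled graph $G'$ with three categories red, blue, green as follows: its nodes are $V$ together with, for each edge $\{u,v\}\in E$ (with an arbitrary choice of which endpoint is called $u$), four new auxiliary nodes $a,b,c,d$ specific to that edge; for each edge $\{u,v\}\in E$ add the six labeled edges $\{u,c\}$ blue, $\{c,d\}$ green, $\{d,v\}$ red, $\{v,b\}$ blue, $\{b,a\}$ green, $\{a,u\}$ red. Then there exists a partition of $V$ into two sets with at least $K$ edges of $G$ crossing the partition if and only if there exists an assignment $Y$ of the nodes of $G'$ to the three colors with $\mathrm{CatEdgeClus}(Y)\le 4|E|-K$.
   Context: For an edge-labeled graph with node set $V'$, edge collection $E'$, categories $C$ and labeling $\ell:E'\to C$, and a node coloring $Y:V'\to C$, an edge $e$ is a mistake ($m_Y(e)=1$) if some endpoint $i\in e$ has $Y[i]\neq\ell(e)$, and $m_Y(e)=0$ otherwise; $\mathrm{CatEdgeClus}(Y)=\sum_{e\in E'}m_Y(e)$ is the number of mistakes. *)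

theory Defs
  imports Main
begin

datatype color = Red | Blue | Green

datatype aux = AuxA | AuxB | AuxC | AuxD

datatype 'a node = Orig 'a | Aux "'a set" aux

definition mistake :: "('v \<Rightarrow> 'c) \<Rightarrow> ('v set \<times> 'c) \<Rightarrow> nat" where
  "mistake Y el = (if \<exists>i\<in>fst el. Y i \<noteq> snd el then 1 else 0)"

definition CatEdgeClus :: "('v set \<times> 'c) set \<Rightarrow> ('v \<Rightarrow> 'c) \<Rightarrow> nat" where
  "CatEdgeClus E' Y = (\<Sum>el\<in>E'. mistake Y el)"

definition gadget :: "('a set \<Rightarrow> 'a \<times> 'a) \<Rightarrow> 'a set \<Rightarrow> ('a node set \<times> color) set" where
  "gadget orient e =
    (let u = fst (orient e); v = snd (orient e) in
     {({Orig u, Aux e AuxC}, Blue),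
      ({Aux e AuxC, Aux e AuxD}, Green),
      ({Aux e AuxD, Orig v}, Red),
      ({Orig v, Aux e AuxB}, Blue),
      ({Aux e AuxB, Aux e AuxA}, Green),
      ({Aux e AuxA, Orig u}, Red)})"

definition reduction_edges :: "'a set set \<Rightarrow> ('a set \<Rightarrow> 'a \<times> 'a) \<Rightarrow> ('a node set \<times> color) set" where
  "reduction_edges E orient = (\<Union>e\<in>E. gadget orient e)"

definition reduction_nodes :: "'a set \<Rightarrow> 'a set set \<Rightarrow> 'a node set" where
  "reduction_nodes V E = Orig ` V \<union> {Aux e x | e x. e \<in> E}"

definition cut_edges :: "'a set set \<Rightarrow> 'a set \<Rightarrow> 'a set set" where
  "cut_edges E S = {e \<in> E. \<exists>x\<in>e. \<exists>y\<in>e. x \<in> S \<and> y \<notin> S}"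

end

theory Submission
  imports Defs
begin

text \<open>Each gadget is a 6-cycle u, c, d, v, b, a whose consecutive edges carry different
  labels, so a colouring satisfies at most every other edge and makes at least three mistakes.
  Three are reached only when u, v are coloured Blue, Red (or Red, Blue) and the auxiliary
  nodes are chosen to satisfy the alternate edges; four are reached whenever u and v get
  the same colour, by colouring all auxiliary nodes Green. So a cut (S, V - S), read as
  S Blue and V - S Red, yields exactly 4|E| - |cut| mistakes, and conversely any colouring
  makes at least 4|E| minus the size of the cut between its Blue vertices and the rest.\<close>

lemma sum_mistake_gadget:
  assumes "orient e = (u, v)" and "u \<noteq> v"
  shows "sum (mistake Y) (gadget orient e) =
           mistake Y ({Orig u, Aux e AuxC}, Blue) + mistake Y ({Aux e AuxC, Aux e AuxD}, Green)
         + mistake Y ({Aux e AuxD, Orig v}, Red) + mistake Y ({Orig v, Aux e AuxB}, Blue)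
         + mistake Y ({Aux e AuxB, Aux e AuxA}, Green) + mistake Y ({Aux e AuxA, Orig u}, Red)"
  using assms unfolding gadget_def Let_def by (simp add: doubleton_eq_iff)

lemma gadget_mistakes_lower_bound:
  assumes "orient e = (u, v)" and "u \<noteq> v"
  shows "4 \<le> sum (mistake Y) (gadget orient e)
              + of_bool ((Y (Orig u) = Blue) \<noteq> (Y (Orig v) = Blue))"
  unfolding sum_mistake_gadget[of orient e u v, OF assms] mistake_def
  by (cases "Y (Orig u)"; cases "Y (Orig v)"; cases "Y (Aux e AuxA)"; cases "Y (Aux e AuxB)";
      cases "Y (Aux e AuxC)"; cases "Y (Aux e AuxD)"; simp)

definition cut_coloring :: "('a set \<Rightarrow> 'a \<times> 'a) \<Rightarrow> 'a set \<Rightarrow> 'a node \<Rightarrow> color" where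
  "cut_coloring orient S n =
    (case n of
      Orig x \<Rightarrow> if x \<in> S then Blue else Red
    | Aux e t \<Rightarrow>
        (let u = fst (orient e); v = snd (orient e) in
         if u \<in> S \<and> v \<notin> S then (case t of AuxC \<Rightarrow> Blue | AuxD \<Rightarrow> Red | _ \<Rightarrow> Green)
         else if u \<notin> S \<and> v \<in> S then (case t of AuxB \<Rightarrow> Blue | AuxA \<Rightarrow> Red | _ \<Rightarrow> Green)
         else Green))"

lemma gadget_mistakes_cut_coloring:
  assumes "orient e = (u, v)" and "u \<noteq> v"
  shows "sum (mistake (cut_coloring orient S)) (gadget orient e) + of_bool ((u \<in> S) \<noteq> (v \<in> S)) = 4"
  unfolding sum_mistake_gadget[of orient e u v, OF assms] mistake_def
  using assms by (cases "u \<in> S"; cases "v \<in> S"; simp add: cut_coloring_def)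

lemma CatEdgeClus_reduction_edges:
  assumes "finite E"
  shows "CatEdgeClus (reduction_edges E orient) Y = (\<Sum>e\<in>E. sum (mistake Y) (gadget orient e))"
  unfolding CatEdgeClus_def reduction_edges_def
proof (rule sum.UNION_disjoint)
  show "\<forall>e\<in>E. finite (gadget orient e)"
    by (simp add: gadget_def Let_def)
  have "fst el \<inter> range (Aux e) \<noteq> {}" "fst el \<inter> range (Aux e') = {} \<or> e' = e"
    if "el \<in> gadget orient e" for el e e'
    using that unfolding gadget_def Let_def by auto
  then show "\<forall>e\<in>E. \<forall>e'\<in>E. e \<noteq> e' \<longrightarrow> gadget orient e \<inter> gadget orient e' = {}"
    by blast
qed fact

lemma card_cut_edges:
  assumes "finite E" and "\<forall>e\<in>E. {fst (orient e), snd (orient e)} = e"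
  shows "card (cut_edges E S) = (\<Sum>e\<in>E. of_bool ((fst (orient e) \<in> S) \<noteq> (snd (orient e) \<in> S)))"
proof -
  have "cut_edges E S = {e \<in> E. (fst (orient e) \<in> S) \<noteq> (snd (orient e) \<in> S)}"
    unfolding cut_edges_def using assms(2) by (metis (no_types, lifting) insert_iff singleton_iff)
  with assms(1) show ?thesis
    by (simp add: sum.If_cases Int_def)
qed

lemma CatEdgeClus_cut_coloring:
  assumes "finite E" and "\<forall>e\<in>E. {fst (orient e), snd (orient e)} = e"
    and "\<forall>e\<in>E. fst (orient e) \<noteq> snd (orient e)"
  shows "CatEdgeClus (reduction_edges E orient) (cut_coloring orient S) + card (cut_edges E S)
         = 4 * card E"
  unfolding CatEdgeClus_reduction_edges[OF assms(1)] card_cut_edges[OF assms(1,2)]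
    sum.distrib[symmetric]
  using gadget_mistakes_cut_coloring[of orient, OF prod.collapse[symmetric]] assms(3) by simp

lemma CatEdgeClus_lower_bound:
  assumes "finite E" and "\<forall>e\<in>E. {fst (orient e), snd (orient e)} = e"
    and "\<forall>e\<in>E. fst (orient e) \<noteq> snd (orient e)"
  shows "4 * card E \<le> CatEdgeClus (reduction_edges E orient) Y
                        + card (cut_edges E {x. Y (Orig x) = Blue})"
proof -
  have "(\<Sum>e\<in>E. 4) \<le> (\<Sum>e\<in>E. sum (mistake Y) (gadget orient e)
          + of_bool ((Y (Orig (fst (orient e))) = Blue) \<noteq> (Y (Orig (snd (orient e))) = Blue)))"
    using assms(3)
    by (intro sum_mono gadget_mistakes_lower_bound[of orient, OF prod.collapse[symmetric]]) simp
  then show ?thesis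
    unfolding CatEdgeClus_reduction_edges[OF assms(1)] card_cut_edges[OF assms(1,2)]
      sum.distrib[symmetric] by simp
qed

lemma cut_edges_Int:
  assumes "\<forall>e\<in>E. e \<subseteq> V"
  shows "cut_edges E (S \<inter> V) = cut_edges E S"
  using assms unfolding cut_edges_def by blast

theorem mainTheorem4:
  fixes V :: "'a set" and E :: "'a set set" and K :: nat
    and orient :: "'a set \<Rightarrow> 'a \<times> 'a"
  assumes "finite V"
    and "\<forall>e\<in>E. \<exists>u v. e = {u, v} \<and> u \<noteq> v \<and> u \<in> V \<and> v \<in> V"
    and "\<forall>e\<in>E. {fst (orient e), snd (orient e)} = e"
  shows "(\<exists>S. S \<subseteq> V \<and> K \<le> card (cut_edges E S)) \<longleftrightarrow>
         (\<exists>Y :: 'a node \<Rightarrow> color.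
            int (CatEdgeClus (reduction_edges E orient) Y) \<le> 4 * int (card E) - int K)"
proof -
  have edges_in_V: "\<forall>e\<in>E. e \<subseteq> V"
    using assms(2) by fastforce
  then have "finite E"
    using assms(1) by (meson PowI finite_Pow_iff finite_subset subsetI)
  have distinct_ends: "\<forall>e\<in>E. fst (orient e) \<noteq> snd (orient e)"
    using assms(2,3) by (metis doubleton_eq_iff)
  note optimal = CatEdgeClus_cut_coloring[OF \<open>finite E\<close> assms(3) distinct_ends]
  note lower_bound = CatEdgeClus_lower_bound[OF \<open>finite E\<close> assms(3) distinct_ends]
  show ?thesis
  proof
    assume "\<exists>S. S \<subseteq> V \<and> K \<le> card (cut_edges E S)"
    then obtain S where "K \<le> card (cut_edges E S)" by blast
    with optimal[of S] show "\<exists>Y. int (CatEdgeClus (reduction_edges E orient) Y) \<le> 4 * int (card E) - int K"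
      by (intro exI[of _ "cut_coloring orient S"]) linarith
  next
    assume "\<exists>Y. int (CatEdgeClus (reduction_edges E orient) Y) \<le> 4 * int (card E) - int K"
    then obtain Y :: "'a node \<Rightarrow> color"
      where "int (CatEdgeClus (reduction_edges E orient) Y) \<le> 4 * int (card E) - int K" by blast
    with lower_bound[of Y] cut_edges_Int[OF edges_in_V]
    show "\<exists>S. S \<subseteq> V \<and> K \<le> card (cut_edges E S)"
      by (intro exI[of _ "{x. Y (Orig x) = Blue} \<inter> V"]) auto
  qed
qed

end
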